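(* Let $\hat\Pi_t=\hat\sigma_t(M_t)$, $t=0,\dots,T$, be an approximate information state with parameters $\epsilon_t,\delta_t,\lambda_t$, and suppose that for each $t$ and each $\hat\pi_t\in[[\hat\Pi_t]]$ the infimum defining $\hat V_t(\hat\pi_t)$ is attained; let $\hat g_t^*(\hat\pi_t)\in\arg\min_{u_t\in[[U_t]]}\hat Q_t(\hat\pi_t,u_t)$ and $g_t^{\mathrm{ap}}(m_t):=\hat g_t^*(\hat\sigma_t(m_t))$. Define $\Lambda_{T+1}\equiv0$ and, for $t=T,\dots,0$, $m_t\in[[M_t]]$, $u_t\in[[U_t]]$, $$\Theta_t(m_t,u_t):=\max\Big\{\sup_{c\in[[C_t|m_t,u_t]]}c,\ \sup_{m_{t+1}\in[[M_{t+1}|m_t,u_t]]}\Lambda_{t+1}(m_{t+1})\Big\},\qquad \Lambda_t(m_t):=\Theta_t(m_t,g_t^{\mathrm{ap}}(m_t)).$$ For $t=0,\dots,T$ let $L_{\hat V_{t+1}}$ be a Lipschitz constant of $\hat V_{t+1}$ (with $L_{\hat V_{T+1}}=0$), and let $\alpha_{T+1}:=0$, $\alpha_t:=\max(\epsilon_t,\alpha_{t+1}+L_{\hat V_{t+1}}\delta_t)$. Then for all $t=0,\dots,T$, $m_t\in[[M_t]]$, $u_t\in[[U_t]]$: $$|Q_t(m_t,u_t)-\Theta_t(m_t,u_t)|\le2\alpha_t,\qquad |V_t(m_t)-\Lambda_t(m_t)|\le2\alpha_t.$$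
   Context: Uncertain variables: fix a sample space $\Omega$; an uncertain variable with values in a set $\mathcal{X}$ is a map $X:\Omega\to\mathcal{X}$, with marginal range $[[X]]:=\{X(\omega):\omega\in\Omega\}$; uncertain variables are independent if their joint range is the product of their marginal ranges. Hausdorff distance: for nonempty subsets $\mathcal{A},\mathcal{B}$ of a metric space $(\mathcal{S},\eta)$, $\mathcal{H}(\mathcal{A},\mathcal{B}):=\max\{\sup_{a\in\mathcal{A}}\inf_{b\in\mathcal{B}}\eta(a,b),\sup_{b\in\mathcal{B}}\inf_{a\in\mathcal{A}}\eta(a,b)\}$. A function $f:\mathcal{X}\to\mathcal{Y}$ between metric spaces is $L$-invertible if there is $L_{f^{-1}}\ge0$ with $\mathcal{H}(f^{-1}(y^1),f^{-1}(y^2))\le L_{f^{-1}}\eta(y^1,y^2)$ for all $y^1,y^2$. System: horizon $T\in\mathbb{N}$. For $t=0,\dots,T$ there are independent disturbances $W_t\in\mathcal{W}_t$, actions $U_t\in\mathcal{U}_t$ taking values in a given set $[[U_t]]\subseteq\mathcal{U}_t$, observations $Y_0=h_0(W_0)$, $Y_{t+1}=h_{t+1}(W_{0:t},U_{0:t})$, and costs $C_t=d_t(W_{0:t},U_{0:t})\in\mathcal{C}_t\subset\mathbb{R}_{\ge0}$. Standing assumptions: $\mathcal{U}_t,\mathcal{W}_t,\mathcal{Y}_t$ are bounded subsets of a metric space $(\mathcal{S},\eta)$ (product spaces carry a metric also denoted $\eta$), the $\mathcal{C}_t$ are bounded subsets of $\mathbb{R}_{\ge0}$, each $h_t$ is Lipschitz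 and $L$-invertible, each $d_t$ is Lipschitz. The memory is $M_t=(Y_{0:t},U_{0:t-1})\in\mathcal{M}_t:=\prod_{\ell=0}^t\mathcal{Y}_\ell\times\prod_{\ell=0}^{t-1}\mathcal{U}_\ell$. Strategy-independent ranges: for $m_t=(y_{0:t},u_{0:t-1})$ let $\mathcal{W}(m_t)$ be the set of $w_{0:t}\in\prod_{\ell=0}^t[[W_\ell]]$ with $y_0=h_0(w_0)$ and $y_\ell=h_\ell(w_{0:\ell-1},u_{0:\ell-1})$ for $\ell=1,\dots,t$. Let $[[M_t]]$ be the set of such $m_t$ with $u_\ell\in[[U_\ell]]$ and $\mathcal{W}(m_t)\neq\emptyset$. For $m_t\in[[M_t]]$, $u_t\in[[U_t]]$: $[[C_t|m_t,u_t]]:=\{d_t(w_{0:t},u_{0:t}):w_{0:t}\in\mathcal{W}(m_t)\}$, $[[Y_{t+1}|m_t,u_t]]:=\{h_{t+1}(w_{0:t},u_{0:t}):w_{0:t}\in\mathcal{W}(m_t)\}$, $[[M_{t+1}|m_t,u_t]]:=\{(m_t,u_t,y_{t+1}):y_{t+1}\in[[Y_{t+1}|m_t,u_t]]\}$. For functions $\hat\sigma_t$ on $\mathcal{M}_t$ and $\hat\Pi_t=\hat\sigma_t(M_t)$: $[[\hat\Pi_t]]:=\hat\sigma_t([[M_t]])$, $[[M_t|\hat\pi_t]]:=\{m_t\in[[M_t]]:\hat\sigma_t(m_t)=\hat\pi_t\}$, $[[\hat\Pi_{t+1}|m_t,u_t]]:=\{\hat\sigma_{t+1}(m_{t+1}):m_{t+1}\in[[M_{t+1}|m_t,u_t]]\}$,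 and for $Z\in\{C_t,Y_{t+1},\hat\Pi_{t+1}\}$, $[[Z|\hat\pi_t,u_t]]:=\bigcup_{m_t\in[[M_t|\hat\pi_t]]}[[Z|m_t,u_t]]$. Memory-based DP: $V_{T+1}\equiv0$ and for $t=T,\dots,0$, $Q_t(m_t,u_t):=\max\{\sup_{c\in[[C_t|m_t,u_t]]}c,\ \sup_{m_{t+1}\in[[M_{t+1}|m_t,u_t]]}V_{t+1}(m_{t+1})\}$, $V_t(m_t):=\inf_{u_t\in[[U_t]]}Q_t(m_t,u_t)$. Approximate information state: $\hat\Pi_t=\hat\sigma_t(M_t)$ with $L$-invertible $\hat\sigma_t:\mathcal{M}_t\to\hat{\mathcal{P}}_t$, $\hat{\mathcal{P}}_t$ bounded with metric $\eta$, such that for each $t=0,\dots,T$ there are $\epsilon_t,\delta_t,\lambda_t\ge0$ with, for all $m_t\in[[M_t]]$, $u_t\in[[U_t]]$: (1) $|\sup_{c\in[[C_t|m_t,u_t]]}c-\sup_{c\in[[C_t|\hat\sigma_t(m_t),u_t]]}c|\le\epsilon_t$; (2) $\mathcal{H}([[\hat\Pi_{t+1}|m_t,u_t]],[[\hat\Pi_{t+1}|\hat\sigma_t(m_t),u_t]])\le\delta_t$; (3) for all $\hat\pi_t^1,\hat\pi_t^2\in[[\hat\Pi_t]]$, $\mathcal{H}([[\hat\Pi_{t+1}|\hat\pi_t^1,u_t]],[[\hat\Pi_{t+1}|\hat\pi_t^2,u_t]])\le\lambda_t\,\eta(\hat\pi_t^1,\hat\pi_t^2)$. Approximate DP: $\hat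 V_{T+1}\equiv0$ and for $t=T,\dots,0$, $\hat\pi_t\in[[\hat\Pi_t]]$, $u_t\in[[U_t]]$: $\hat Q_t(\hat\pi_t,u_t):=\max\{\sup_{c\in[[C_t|\hat\pi_t,u_t]]}c,\ \sup_{\hat\pi_{t+1}\in[[\hat\Pi_{t+1}|\hat\pi_t,u_t]]}\hat V_{t+1}(\hat\pi_{t+1})\}$, $\hat V_t(\hat\pi_t):=\inf_{u_t\in[[U_t]]}\hat Q_t(\hat\pi_t,u_t)$. (Each $\hat V_t$ is Lipschitz on $[[\hat\Pi_t]]$.) *)

theory Defs
  imports "HOL-Analysis.Analysis"
begin

text \<open>A memory m_t = (y_{0:t}, u_{0:t-1}) is represented as a pair of lists.
  Disturbance/action sequences w_{0:t}, u_{0:t} are lists as well.\<close>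

type_synonym 'a mem = "'a list \<times> 'a list"

definition ldist :: "('a::metric_space) list \<Rightarrow> 'a list \<Rightarrow> real" where
  "ldist xs ys = foldr max (map (\<lambda>(x, y). dist x y) (zip xs ys)) 0"

definition pdist :: "('a::metric_space) mem \<Rightarrow> 'a mem \<Rightarrow> real" where
  "pdist p q = max (ldist (fst p) (fst q)) (ldist (snd p) (snd q))"

definition hdist :: "('b \<Rightarrow> 'b \<Rightarrow> real) \<Rightarrow> 'b set \<Rightarrow> 'b set \<Rightarrow> real" where
  "hdist eta A B = max (SUP a\<in>A. INF b\<in>B. eta a b) (SUP b\<in>B. INF a\<in>A. eta a b)"

definition lipschitz_wrt :: "('b \<Rightarrow> 'b \<Rightarrow> real) \<Rightarrow> ('c \<Rightarrow> 'c \<Rightarrow> real) \<Rightarrow> 'b set \<Rightarrow> ('b \<Rightarrow> 'c) \<Rightarrow> bool" where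
  "lipschitz_wrt etaX etaY D f \<longleftrightarrow> (\<exists>L\<ge>0. \<forall>x\<in>D. \<forall>x'\<in>D. etaY (f x) (f x') \<le> L * etaX x x')"

definition L_invertible :: "('b \<Rightarrow> 'b \<Rightarrow> real) \<Rightarrow> ('c \<Rightarrow> 'c \<Rightarrow> real) \<Rightarrow> 'b set \<Rightarrow> ('b \<Rightarrow> 'c) \<Rightarrow> bool" where
  "L_invertible etaX etaY D f \<longleftrightarrow>
     (\<exists>L\<ge>0. \<forall>y1\<in>f ` D. \<forall>y2\<in>f ` D.
        hdist etaX {x\<in>D. f x = y1} {x\<in>D. f x = y2} \<le> L * etaY y1 y2)"

definition ProdL :: "(nat \<Rightarrow> 'a set) \<Rightarrow> nat \<Rightarrow> 'a list set" where
  "ProdL S n = {xs. length xs = n \<and> (\<forall>i<n. xs ! i \<in> S i)}"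

definition hdom :: "(nat \<Rightarrow> 'a set) \<Rightarrow> (nat \<Rightarrow> 'a set) \<Rightarrow> nat \<Rightarrow> 'a mem set" where
  "hdom Wsp Usp t = (if t = 0 then ProdL Wsp 1 \<times> {[]} else ProdL Wsp t \<times> ProdL Usp t)"

definition Msp :: "(nat \<Rightarrow> 'a set) \<Rightarrow> (nat \<Rightarrow> 'a set) \<Rightarrow> nat \<Rightarrow> 'a mem set" where
  "Msp Ysp Usp t = ProdL Ysp (Suc t) \<times> ProdL Usp t"

text \<open>W(m_t). Here h 0 is applied to ([w_0], []) and h l to (w_{0:l-1}, u_{0:l-1}).\<close>
definition Wm :: "(nat \<Rightarrow> 'a mem \<Rightarrow> 'a) \<Rightarrow> (nat \<Rightarrow> 'a set) \<Rightarrow> nat \<Rightarrow> 'a mem \<Rightarrow> 'a list set" where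
  "Wm h Wr t m = (case m of (ys, us) \<Rightarrow>
     {ws \<in> ProdL Wr (Suc t). ys ! 0 = h 0 ([ws ! 0], []) \<and>
        (\<forall>l\<in>{1..t}. ys ! l = h l (take l ws, take l us))})"

definition Mset :: "(nat \<Rightarrow> 'a mem \<Rightarrow> 'a) \<Rightarrow> (nat \<Rightarrow> 'a set) \<Rightarrow> (nat \<Rightarrow> 'a set) \<Rightarrow> nat \<Rightarrow> 'a mem set" where
  "Mset h Wr Ur t = {(ys, us). length ys = Suc t \<and> us \<in> ProdL Ur t \<and> Wm h Wr t (ys, us) \<noteq> {}}"

definition Cset :: "(nat \<Rightarrow> 'a mem \<Rightarrow> 'a) \<Rightarrow> (nat \<Rightarrow> 'a set) \<Rightarrow> (nat \<Rightarrow> 'a mem \<Rightarrow> real) \<Rightarrow> nat \<Rightarrow> 'a mem \<Rightarrow> 'a \<Rightarrow> real set" where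
  "Cset h Wr d t m u = (\<lambda>ws. d t (ws, snd m @ [u])) ` Wm h Wr t m"

definition Yset :: "(nat \<Rightarrow> 'a mem \<Rightarrow> 'a) \<Rightarrow> (nat \<Rightarrow> 'a set) \<Rightarrow> nat \<Rightarrow> 'a mem \<Rightarrow> 'a \<Rightarrow> 'a set" where
  "Yset h Wr t m u = (\<lambda>ws. h (Suc t) (ws, snd m @ [u])) ` Wm h Wr t m"

text \<open>[[M_{t+1} | m_t, u_t]]; (m_t, u_t, y_{t+1}) is (y_{0:t} @ [y_{t+1}], u_{0:t-1} @ [u_t]).\<close>
definition Mnext :: "(nat \<Rightarrow> 'a mem \<Rightarrow> 'a) \<Rightarrow> (nat \<Rightarrow> 'a set) \<Rightarrow> nat \<Rightarrow> 'a mem \<Rightarrow> 'a \<Rightarrow> 'a mem set" where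
  "Mnext h Wr t m u = (\<lambda>y. (fst m @ [y], snd m @ [u])) ` Yset h Wr t m u"

definition PiR :: "(nat \<Rightarrow> 'a mem \<Rightarrow> 'a) \<Rightarrow> (nat \<Rightarrow> 'a set) \<Rightarrow> (nat \<Rightarrow> 'a set) \<Rightarrow> (nat \<Rightarrow> 'a mem \<Rightarrow> 'p) \<Rightarrow> nat \<Rightarrow> 'p set" where
  "PiR h Wr Ur \<sigma> t = \<sigma> t ` Mset h Wr Ur t"

definition MofPi :: "(nat \<Rightarrow> 'a mem \<Rightarrow> 'a) \<Rightarrow> (nat \<Rightarrow> 'a set) \<Rightarrow> (nat \<Rightarrow> 'a set) \<Rightarrow> (nat \<Rightarrow> 'a mem \<Rightarrow> 'p) \<Rightarrow> nat \<Rightarrow> 'p \<Rightarrow> 'a mem set" where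
  "MofPi h Wr Ur \<sigma> t p = {m \<in> Mset h Wr Ur t. \<sigma> t m = p}"

definition PiNext :: "(nat \<Rightarrow> 'a mem \<Rightarrow> 'a) \<Rightarrow> (nat \<Rightarrow> 'a set) \<Rightarrow> (nat \<Rightarrow> 'a mem \<Rightarrow> 'p) \<Rightarrow> nat \<Rightarrow> 'a mem \<Rightarrow> 'a \<Rightarrow> 'p set" where
  "PiNext h Wr \<sigma> t m u = \<sigma> (Suc t) ` Mnext h Wr t m u"

definition CsetP :: "(nat \<Rightarrow> 'a mem \<Rightarrow> 'a) \<Rightarrow> (nat \<Rightarrow> 'a set) \<Rightarrow> (nat \<Rightarrow> 'a set) \<Rightarrow> (nat \<Rightarrow> 'a mem \<Rightarrow> real) \<Rightarrow> (nat \<Rightarrow> 'a mem \<Rightarrow> 'p) \<Rightarrow> nat \<Rightarrow> 'p \<Rightarrow> 'a \<Rightarrow> real set" where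
  "CsetP h Wr Ur d \<sigma> t p u = (\<Union>m\<in>MofPi h Wr Ur \<sigma> t p. Cset h Wr d t m u)"

definition PiNextP :: "(nat \<Rightarrow> 'a mem \<Rightarrow> 'a) \<Rightarrow> (nat \<Rightarrow> 'a set) \<Rightarrow> (nat \<Rightarrow> 'a set) \<Rightarrow> (nat \<Rightarrow> 'a mem \<Rightarrow> 'p) \<Rightarrow> nat \<Rightarrow> 'p \<Rightarrow> 'a \<Rightarrow> 'p set" where
  "PiNextP h Wr Ur \<sigma> t p u = (\<Union>m\<in>MofPi h Wr Ur \<sigma> t p. PiNext h Wr \<sigma> t m u)"

end

theory Submission
  imports Defs
begin

(* Backward induction on t shows that V t and \<Lambda> t both lie within \<alpha> t of Vh t \<circ> \<sigma> t, and
   Q t, \<Theta> t within \<alpha> t of Qh t (\<sigma> t m); the 2 \<alpha> t bounds follow by the triangle inequality.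
   In the Q-step the cost terms differ by at most \<epsilon> t by (1). The continuation terms differ by
   \<alpha> (t+1) (induction) plus LV (t+1) * \<delta> t: the suprema of an L-Lipschitz function over two
   bounded sets differ by at most L times their Hausdorff distance, which is at most \<delta> t by (2).
   In the V-step, gh t minimises Qh t, so Vh t (\<sigma> t m) = Qh t (\<sigma> t m) (gh t (\<sigma> t m)),
   the quantity \<Lambda> t m is built from. *)

lemma abs_max_diff_le:
  fixes a b a' b' e :: real
  assumes "\<bar>a - a'\<bar> \<le> e" and "\<bar>b - b'\<bar> \<le> e"
  shows "\<bar>max a b - max a' b'\<bar> \<le> e"
  using assms by (auto simp: max_def abs_le_iff)

lemma cSUP_le_cSUP_add:
  fixes f g :: "'b \<Rightarrow> real"
  assumes "X \<noteq> {}" and "bdd_above (g ` X)" and "\<And>x. x \<in> X \<Longrightarrow> f x \<le> g x + e"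
  shows "(SUP x\<in>X. f x) \<le> (SUP x\<in>X. g x) + e"
proof (rule cSUP_least[OF assms(1)])
  fix x assume "x \<in> X"
  then show "f x \<le> (SUP x\<in>X. g x) + e"
    using assms(3) cSUP_upper[OF _ assms(2)] by (meson add_right_mono order_trans)
qed

lemma abs_cSUP_diff_le:
  fixes f g :: "'b \<Rightarrow> real"
  assumes "X \<noteq> {}" and "bdd_above (g ` X)" and "\<And>x. x \<in> X \<Longrightarrow> \<bar>f x - g x\<bar> \<le> e"
  shows "\<bar>(SUP x\<in>X. f x) - (SUP x\<in>X. g x)\<bar> \<le> e"
proof -
  have le: "f x \<le> g x + e" "g x \<le> f x + e" if "x \<in> X" for x
    using assms(3)[OF that] by (simp_all add: abs_le_iff)
  obtain B where "\<And>x. x \<in> X \<Longrightarrow> g x \<le> B"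
    using assms(2) by (auto simp: bdd_above_def)
  then have "bdd_above (f ` X)"
    using le(1) by (intro bdd_aboveI2[of _ _ "B + e"]) (meson add_right_mono order_trans)
  then have "(SUP x\<in>X. g x) \<le> (SUP x\<in>X. f x) + e"
    using le(2) by (intro cSUP_le_cSUP_add[OF assms(1)])
  moreover have "(SUP x\<in>X. f x) \<le> (SUP x\<in>X. g x) + e"
    using le(1) by (intro cSUP_le_cSUP_add[OF assms(1,2)])
  ultimately show ?thesis
    by linarith
qed

lemma abs_cINF_diff_le_if_minimum:
  fixes f g :: "'b \<Rightarrow> real"
  assumes "z \<in> X" and "\<And>x. x \<in> X \<Longrightarrow> g z \<le> g x" and "\<And>x. x \<in> X \<Longrightarrow> \<bar>f x - g x\<bar> \<le> e"
  shows "\<bar>(INF x\<in>X. f x) - (INF x\<in>X. g x)\<bar> \<le> e"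
proof -
  have "(INF x\<in>X. g x) = g z"
    using assms(1,2) by (intro cInf_eq_minimum) auto
  moreover have lower: "g z - e \<le> f x" if "x \<in> X" for x
    using assms(2,3)[OF that] by (simp add: abs_le_iff)
  then have "g z - e \<le> (INF x\<in>X. f x)"
    using assms(1) by (intro cINF_greatest) auto
  moreover have "(INF x\<in>X. f x) \<le> f z"
    using lower assms(1) by (intro cINF_lower bdd_belowI2) auto
  ultimately show ?thesis
    using assms(3)[OF assms(1)] by (simp add: abs_le_iff)
qed

lemma lipschitz_on_bounded_image:
  assumes "L-lipschitz_on S f" and "bounded S"
  shows "bounded (f ` S)"
proof -
  obtain D where "\<And>x y. x \<in> S \<Longrightarrow> y \<in> S \<Longrightarrow> dist x y \<le> D"
    using assms(2) by (auto simp: bounded_two_points)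
  then have "dist (f x) (f y) \<le> L * D" if "x \<in> S" "y \<in> S" for x y
    using that lipschitz_onD[OF assms(1)] lipschitz_on_nonneg[OF assms(1)]
    by (meson mult_left_mono order_trans)
  then show ?thesis
    by (auto simp: bounded_two_points)
qed

lemma lipschitz_on_le_cSup_add_infdist:
  fixes f :: "'p::metric_space \<Rightarrow> real"
  assumes "L-lipschitz_on (insert a B) f" and "B \<noteq> {}" and "bdd_above (f ` B)"
  shows "f a \<le> Sup (f ` B) + L * infdist a B"
proof -
  have close: "f a \<le> Sup (f ` B) + L * dist a b" if "b \<in> B" for b
  proof -
    have "f a - f b \<le> L * dist a b"
      using lipschitz_onD[OF assms(1), of a b] that by (simp add: dist_real_def)
    moreover have "f b \<le> Sup (f ` B)"
      using cSUP_upper[OF that assms(3)] .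
    ultimately show ?thesis
      by linarith
  qed
  show ?thesis
  proof (cases "L = 0")
    case True
    then show ?thesis
      using close assms(2) by auto
  next
    case False
    then have L: "L > 0"
      using lipschitz_on_nonneg[OF assms(1)] by simp
    have "(f a - Sup (f ` B)) / L \<le> infdist a B"
      unfolding infdist_notempty[OF assms(2)]
      using close L assms(2) by (intro cINF_greatest) (auto simp: pos_divide_le_eq algebra_simps)
    then show ?thesis
      using L by (simp add: pos_divide_le_eq algebra_simps)
  qed
qed

lemma hdist_dist_commute: "hdist dist A B = hdist dist B A"
  by (simp add: hdist_def dist_commute max.commute)

lemma cSup_image_le_add_hdist:
  fixes f :: "'p::metric_space \<Rightarrow> real"
  assumes "A \<noteq> {}" and "B \<noteq> {}" and "bounded (A \<union> B)" and "L-lipschitz_on (A \<union> B) f"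
  shows "Sup (f ` A) \<le> Sup (f ` B) + L * hdist dist A B"
proof (rule cSUP_least[OF assms(1)])
  fix a assume a: "a \<in> A"
  have "bdd_above (f ` B)"
    using lipschitz_on_bounded_image[OF assms(4,3)]
    by (meson bounded_imp_bdd_above bounded_subset image_mono sup_ge2)
  then have "f a \<le> Sup (f ` B) + L * infdist a B"
    using a assms(2) by (intro lipschitz_on_le_cSup_add_infdist lipschitz_on_subset[OF assms(4)]) auto
  moreover have "1-lipschitz_on A (\<lambda>x. infdist x B)"
    by (intro lipschitz_onI) (auto simp: dist_real_def infdist_triangle_abs)
  then have "bdd_above ((\<lambda>x. infdist x B) ` A)"
    using assms(3) by (meson bounded_imp_bdd_above bounded_subset lipschitz_on_bounded_image sup_ge1)
  then have "infdist a B \<le> hdist dist A B"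
    using a cSUP_upper by (fastforce simp: hdist_def infdist_notempty[OF assms(2)])
  ultimately show "f a \<le> Sup (f ` B) + L * hdist dist A B"
    using lipschitz_on_nonneg[OF assms(4)] by (meson add_left_mono mult_left_mono order_trans)
qed

lemma abs_cSup_image_diff_le_hdist:
  fixes f :: "'p::metric_space \<Rightarrow> real"
  assumes "A \<noteq> {}" and "B \<noteq> {}" and "bounded (A \<union> B)" and "L-lipschitz_on (A \<union> B) f"
  shows "\<bar>Sup (f ` A) - Sup (f ` B)\<bar> \<le> L * hdist dist A B"
  using cSup_image_le_add_hdist[OF assms] cSup_image_le_add_hdist[of B A L f] assms
  by (simp add: Un_commute hdist_dist_commute)

lemma take_in_ProdL: "xs \<in> ProdL S n \<Longrightarrow> i \<le> n \<Longrightarrow> take i xs \<in> ProdL S i"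
  by (auto simp: ProdL_def)

lemma ProdL_mono: "(\<And>i. i < n \<Longrightarrow> S i \<subseteq> S' i) \<Longrightarrow> ProdL S n \<subseteq> ProdL S' n"
  by (auto simp: ProdL_def)

lemma Wm_snoc:
  assumes "ws \<in> Wm h Wr t (ys, us)" and "length ys = Suc t" and "length us = t"
    and "w \<in> Wr (Suc t)"
  shows "ws @ [w] \<in> Wm h Wr (Suc t) (ys @ [h (Suc t) (ws, us @ [u])], us @ [u])"
proof -
  have "length ws = Suc t"
    using assms(1) by (simp add: Wm_def ProdL_def)
  then show ?thesis
    using assms by (auto simp: Wm_def ProdL_def nth_append less_Suc_eq le_Suc_eq)
qed

lemma Mnext_subset_Mset:
  assumes "m \<in> Mset h Wr Ur t" and "u \<in> Ur t" and "Wr (Suc t) \<noteq> {}"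
  shows "Mnext h Wr t m u \<subseteq> Mset h Wr Ur (Suc t)"
proof
  fix m' assume "m' \<in> Mnext h Wr t m u"
  then obtain ws where ws: "ws \<in> Wm h Wr t m"
    and m': "m' = (fst m @ [h (Suc t) (ws, snd m @ [u])], snd m @ [u])"
    by (auto simp: Mnext_def Yset_def)
  obtain w where "w \<in> Wr (Suc t)"
    using assms(3) by blast
  moreover obtain ys us where "m = (ys, us)" "length ys = Suc t" "us \<in> ProdL Ur t"
    using assms(1) by (auto simp: Mset_def)
  ultimately show "m' \<in> Mset h Wr Ur (Suc t)"
    using Wm_snoc[of ws h Wr t ys us w u] ws m' assms(2)
    by (auto simp: Mset_def ProdL_def nth_append less_Suc_eq)
qed

lemma Mnext_nonempty: "m \<in> Mset h Wr Ur t \<Longrightarrow> Mnext h Wr t m u \<noteq> {}"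
  by (auto simp: Mset_def Mnext_def Yset_def)

lemma Mset_subset_Msp:
  assumes "\<And>i. i \<le> t \<Longrightarrow> Wr i \<subseteq> Wsp i" and "\<And>i. i < t \<Longrightarrow> Ur i \<subseteq> Usp i"
    and "\<And>i x. i \<le> t \<Longrightarrow> x \<in> hdom Wsp Usp i \<Longrightarrow> h i x \<in> Ysp i"
  shows "Mset h Wr Ur t \<subseteq> Msp Ysp Usp t"
proof
  fix m assume "m \<in> Mset h Wr Ur t"
  then obtain ys us ws where m: "m = (ys, us)" and ys: "length ys = Suc t"
    and us: "us \<in> ProdL Ur t" and ws: "ws \<in> Wm h Wr t (ys, us)"
    by (auto simp: Mset_def)
  have wsP: "ws \<in> ProdL Wsp (Suc t)"
    using ws ProdL_mono[of "Suc t" Wr Wsp] assms(1) by (auto simp: Wm_def)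
  have usP: "us \<in> ProdL Usp t"
    using us ProdL_mono[of t Ur Usp] assms(2) by auto
  have "ys ! i \<in> Ysp i" if "i < Suc t" for i
  proof (cases "i = 0")
    case True
    then have "([ws ! 0], []) \<in> hdom Wsp Usp i"
      using wsP by (auto simp: hdom_def ProdL_def)
    then show ?thesis
      using ws True assms(3)[of i] by (auto simp: Wm_def)
  next
    case False
    then have "(take i ws, take i us) \<in> hdom Wsp Usp i"
      using that wsP usP by (auto simp: hdom_def intro: take_in_ProdL)
    then show ?thesis
      using ws False that assms(3)[of i] by (auto simp: Wm_def)
  qed
  then show "m \<in> Msp Ysp Usp t"
    using m ys usP by (simp add: Msp_def ProdL_def)
qed

locale ais_dynamic_programs =
  fixes T :: nat
    and h :: "nat \<Rightarrow> 'a mem \<Rightarrow> 'a" and d :: "nat \<Rightarrow> 'a mem \<Rightarrow> real"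
    and Wr Ur :: "nat \<Rightarrow> 'a set"
    and \<sigma> :: "nat \<Rightarrow> 'a mem \<Rightarrow> 'p::metric_space"
    and \<epsilon> \<delta> LV \<alpha> :: "nat \<Rightarrow> real"
    and Q \<Theta> :: "nat \<Rightarrow> 'a mem \<Rightarrow> 'a \<Rightarrow> real" and V \<Lambda> :: "nat \<Rightarrow> 'a mem \<Rightarrow> real"
    and Qh :: "nat \<Rightarrow> 'p \<Rightarrow> 'a \<Rightarrow> real" and Vh :: "nat \<Rightarrow> 'p \<Rightarrow> real"
    and gh :: "nat \<Rightarrow> 'p \<Rightarrow> 'a"
  assumes Wr_nonempty: "\<And>t. Wr t \<noteq> {}"
    and PiR_bounded: "\<And>t. t \<le> T \<Longrightarrow> bounded (PiR h Wr Ur \<sigma> t)"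
    and ais_cost: "\<And>t m u. t \<le> T \<Longrightarrow> m \<in> Mset h Wr Ur t \<Longrightarrow> u \<in> Ur t \<Longrightarrow>
      \<bar>Sup (Cset h Wr d t m u) - Sup (CsetP h Wr Ur d \<sigma> t (\<sigma> t m) u)\<bar> \<le> \<epsilon> t"
    and ais_next: "\<And>t m u. t \<le> T \<Longrightarrow> m \<in> Mset h Wr Ur t \<Longrightarrow> u \<in> Ur t \<Longrightarrow>
      hdist dist (PiNext h Wr \<sigma> t m u) (PiNextP h Wr Ur \<sigma> t (\<sigma> t m) u) \<le> \<delta> t"
    and V_last: "\<And>m. V (Suc T) m = 0"
    and Q_eq: "\<And>t m u. t \<le> T \<Longrightarrow> m \<in> Mset h Wr Ur t \<Longrightarrow> u \<in> Ur t \<Longrightarrow>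
      Q t m u = max (Sup (Cset h Wr d t m u)) (SUP m'\<in>Mnext h Wr t m u. V (Suc t) m')"
    and V_eq: "\<And>t m. t \<le> T \<Longrightarrow> m \<in> Mset h Wr Ur t \<Longrightarrow> V t m = (INF u\<in>Ur t. Q t m u)"
    and Vh_last: "\<And>p. Vh (Suc T) p = 0"
    and Qh_eq: "\<And>t p u. t \<le> T \<Longrightarrow> p \<in> PiR h Wr Ur \<sigma> t \<Longrightarrow> u \<in> Ur t \<Longrightarrow>
      Qh t p u = max (Sup (CsetP h Wr Ur d \<sigma> t p u)) (SUP p'\<in>PiNextP h Wr Ur \<sigma> t p u. Vh (Suc t) p')"
    and Vh_eq: "\<And>t p. t \<le> T \<Longrightarrow> p \<in> PiR h Wr Ur \<sigma> t \<Longrightarrow> Vh t p = (INF u\<in>Ur t. Qh t p u)"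
    and gh_argmin: "\<And>t p. t \<le> T \<Longrightarrow> p \<in> PiR h Wr Ur \<sigma> t \<Longrightarrow>
      gh t p \<in> Ur t \<and> (\<forall>u\<in>Ur t. Qh t p (gh t p) \<le> Qh t p u)"
    and \<Lambda>_last: "\<And>m. \<Lambda> (Suc T) m = 0"
    and \<Theta>_eq: "\<And>t m u. t \<le> T \<Longrightarrow> m \<in> Mset h Wr Ur t \<Longrightarrow> u \<in> Ur t \<Longrightarrow>
      \<Theta> t m u = max (Sup (Cset h Wr d t m u)) (SUP m'\<in>Mnext h Wr t m u. \<Lambda> (Suc t) m')"
    and \<Lambda>_eq: "\<And>t m. t \<le> T \<Longrightarrow> m \<in> Mset h Wr Ur t \<Longrightarrow> \<Lambda> t m = \<Theta> t m (gh t (\<sigma> t m))"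
    and Vh_lipschitz: "\<And>t. t < T \<Longrightarrow> (LV (Suc t))-lipschitz_on (PiR h Wr Ur \<sigma> (Suc t)) (Vh (Suc t))"
    and LV_last: "LV (Suc T) = 0"
    and \<alpha>_last: "\<alpha> (Suc T) = 0"
    and \<alpha>_eq: "\<And>t. t \<le> T \<Longrightarrow> \<alpha> t = max (\<epsilon> t) (\<alpha> (Suc t) + LV (Suc t) * \<delta> t)"
begin

lemma PiNext_subset_PiR:
  assumes "m \<in> Mset h Wr Ur t" and "u \<in> Ur t"
  shows "PiNext h Wr \<sigma> t m u \<subseteq> PiR h Wr Ur \<sigma> (Suc t)"
  using Mnext_subset_Mset[OF assms Wr_nonempty] by (auto simp: PiNext_def PiR_def)

lemma PiNextP_subset_PiR:
  assumes "u \<in> Ur t"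
  shows "PiNextP h Wr Ur \<sigma> t p u \<subseteq> PiR h Wr Ur \<sigma> (Suc t)"
  unfolding PiNextP_def MofPi_def using PiNext_subset_PiR assms by blast

lemma PiNextP_nonempty:
  assumes "m \<in> Mset h Wr Ur t"
  shows "PiNextP h Wr Ur \<sigma> t (\<sigma> t m) u \<noteq> {}"
proof -
  have "m \<in> MofPi h Wr Ur \<sigma> t (\<sigma> t m)"
    using assms by (simp add: MofPi_def)
  then show ?thesis
    using Mnext_nonempty[OF assms, of u] unfolding PiNextP_def PiNext_def by blast
qed

lemma Sup_Vh_next_close:
  assumes "t \<le> T" and "m \<in> Mset h Wr Ur t" and "u \<in> Ur t"
  shows "\<bar>Sup (Vh (Suc t) ` PiNext h Wr \<sigma> t m u) -
      Sup (Vh (Suc t) ` PiNextP h Wr Ur \<sigma> t (\<sigma> t m) u)\<bar> \<le> LV (Suc t) * \<delta> t"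
proof (cases "t = T")
  case True
  \<comment> \<open>PiR h Wr Ur \<sigma> (Suc T) need not be bounded, but Vh (Suc T) vanishes\<close>
  then show ?thesis
    using Mnext_nonempty[OF assms(2)] PiNextP_nonempty[OF assms(2)]
    by (simp add: Vh_last LV_last PiNext_def)
next
  case False
  let ?A = "PiNext h Wr \<sigma> t m u" and ?B = "PiNextP h Wr Ur \<sigma> t (\<sigma> t m) u"
  have AB: "?A \<union> ?B \<subseteq> PiR h Wr Ur \<sigma> (Suc t)"
    using PiNext_subset_PiR[OF assms(2,3)] PiNextP_subset_PiR[OF assms(3)] by blast
  have "\<bar>Sup (Vh (Suc t) ` ?A) - Sup (Vh (Suc t) ` ?B)\<bar> \<le> LV (Suc t) * hdist dist ?A ?B"
  proof (rule abs_cSup_image_diff_le_hdist)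
    show "?A \<noteq> {}" "?B \<noteq> {}"
      using Mnext_nonempty[OF assms(2)] PiNextP_nonempty[OF assms(2)] by (auto simp: PiNext_def)
    show "bounded (?A \<union> ?B)"
      using AB PiR_bounded[of "Suc t"] assms(1) False bounded_subset by auto
    show "(LV (Suc t))-lipschitz_on (?A \<union> ?B) (Vh (Suc t))"
      using lipschitz_on_subset[OF Vh_lipschitz[of t] AB] assms(1) False by simp
  qed
  also have "\<dots> \<le> LV (Suc t) * \<delta> t"
    using ais_next[OF assms] Vh_lipschitz[of t] assms(1) False
    by (intro mult_left_mono) (auto intro: lipschitz_on_nonneg)
  finally show ?thesis .
qed

lemma bdd_above_Vh_next:
  assumes "t \<le> T"
  shows "bdd_above (Vh (Suc t) ` PiR h Wr Ur \<sigma> (Suc t))"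
proof (cases "t = T")
  case True
  then show ?thesis
    using bdd_aboveI2[of _ "\<lambda>_. 0 :: real" 0] by (simp add: Vh_last)
next
  case False
  then show ?thesis
    using assms Vh_lipschitz[of t] PiR_bounded[of "Suc t"]
    by (auto intro: bounded_imp_bdd_above lipschitz_on_bounded_image)
qed

lemma Sup_next_value_close:
  assumes "t \<le> T" and "m \<in> Mset h Wr Ur t" and "u \<in> Ur t"
    and F: "\<And>m'. m' \<in> Mset h Wr Ur (Suc t) \<Longrightarrow> \<bar>F m' - Vh (Suc t) (\<sigma> (Suc t) m')\<bar> \<le> \<alpha> (Suc t)"
  shows "\<bar>(SUP m'\<in>Mnext h Wr t m u. F m') - (SUP p'\<in>PiNextP h Wr Ur \<sigma> t (\<sigma> t m) u. Vh (Suc t) p')\<bar>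
      \<le> \<alpha> (Suc t) + LV (Suc t) * \<delta> t"
proof -
  have Vh_image:
    "Vh (Suc t) ` PiNext h Wr \<sigma> t m u = (\<lambda>m'. Vh (Suc t) (\<sigma> (Suc t) m')) ` Mnext h Wr t m u"
    by (simp add: PiNext_def image_image)
  have "bdd_above (Vh (Suc t) ` PiNext h Wr \<sigma> t m u)"
    using bdd_above_Vh_next[OF assms(1)] image_mono[OF PiNext_subset_PiR[OF assms(2,3)]]
    by (rule bdd_above_mono)
  then have "\<bar>(SUP m'\<in>Mnext h Wr t m u. F m') - Sup (Vh (Suc t) ` PiNext h Wr \<sigma> t m u)\<bar> \<le> \<alpha> (Suc t)"
    unfolding Vh_image
    using Mnext_subset_Mset[OF assms(2,3) Wr_nonempty]
    by (intro abs_cSUP_diff_le Mnext_nonempty[OF assms(2)] F) auto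
  then show ?thesis
    using Sup_Vh_next_close[OF assms(1-3)] by linarith
qed

lemma Q_\<Theta>_close:
  assumes "t \<le> T" and "m \<in> Mset h Wr Ur t" and "u \<in> Ur t"
    and next_close: "\<And>m'. m' \<in> Mset h Wr Ur (Suc t) \<Longrightarrow>
      \<bar>V (Suc t) m' - Vh (Suc t) (\<sigma> (Suc t) m')\<bar> \<le> \<alpha> (Suc t) \<and>
      \<bar>\<Lambda> (Suc t) m' - Vh (Suc t) (\<sigma> (Suc t) m')\<bar> \<le> \<alpha> (Suc t)"
  shows "\<bar>Q t m u - Qh t (\<sigma> t m) u\<bar> \<le> \<alpha> t \<and> \<bar>\<Theta> t m u - Qh t (\<sigma> t m) u\<bar> \<le> \<alpha> t"
proof -
  have p: "\<sigma> t m \<in> PiR h Wr Ur \<sigma> t"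
    using assms(2) by (simp add: PiR_def)
  have cost: "\<bar>Sup (Cset h Wr d t m u) - Sup (CsetP h Wr Ur d \<sigma> t (\<sigma> t m) u)\<bar> \<le> \<alpha> t"
    using ais_cost[OF assms(1-3)] \<alpha>_eq[OF assms(1)] by linarith
  let ?Vh_next = "SUP p'\<in>PiNextP h Wr Ur \<sigma> t (\<sigma> t m) u. Vh (Suc t) p'"
  have "\<alpha> (Suc t) + LV (Suc t) * \<delta> t \<le> \<alpha> t"
    using \<alpha>_eq[OF assms(1)] by simp
  then have next_V: "\<bar>(SUP m'\<in>Mnext h Wr t m u. V (Suc t) m') - ?Vh_next\<bar> \<le> \<alpha> t"
    and next_\<Lambda>: "\<bar>(SUP m'\<in>Mnext h Wr t m u. \<Lambda> (Suc t) m') - ?Vh_next\<bar> \<le> \<alpha> t"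
    using Sup_next_value_close[OF assms(1-3)] next_close by (meson order_trans)+
  show ?thesis
    unfolding Q_eq[OF assms(1-3)] \<Theta>_eq[OF assms(1-3)] Qh_eq[OF assms(1) p assms(3)]
    by (intro conjI abs_max_diff_le cost next_V next_\<Lambda>)
qed

lemma V_\<Lambda>_close_if_Q_\<Theta>_close:
  assumes "t \<le> T" and "m \<in> Mset h Wr Ur t"
    and close: "\<And>u. u \<in> Ur t \<Longrightarrow>
      \<bar>Q t m u - Qh t (\<sigma> t m) u\<bar> \<le> \<alpha> t \<and> \<bar>\<Theta> t m u - Qh t (\<sigma> t m) u\<bar> \<le> \<alpha> t"
  shows "\<bar>V t m - Vh t (\<sigma> t m)\<bar> \<le> \<alpha> t \<and> \<bar>\<Lambda> t m - Vh t (\<sigma> t m)\<bar> \<le> \<alpha> t"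
proof -
  let ?p = "\<sigma> t m"
  have p: "?p \<in> PiR h Wr Ur \<sigma> t"
    using assms(2) by (simp add: PiR_def)
  have g: "gh t ?p \<in> Ur t" and g_min: "\<And>u. u \<in> Ur t \<Longrightarrow> Qh t ?p (gh t ?p) \<le> Qh t ?p u"
    using gh_argmin[OF assms(1) p] by auto
  have "Vh t ?p = Qh t ?p (gh t ?p)"
    unfolding Vh_eq[OF assms(1) p] using g g_min by (intro cInf_eq_minimum) auto
  moreover have "\<bar>V t m - Vh t ?p\<bar> \<le> \<alpha> t"
    unfolding V_eq[OF assms(1,2)] Vh_eq[OF assms(1) p]
    using g g_min close by (intro abs_cINF_diff_le_if_minimum) auto
  ultimately show ?thesis
    using close[OF g] \<Lambda>_eq[OF assms(1,2)] by simp
qed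

lemma V_\<Lambda>_close:
  assumes "t \<le> Suc T" and "m \<in> Mset h Wr Ur t"
  shows "\<bar>V t m - Vh t (\<sigma> t m)\<bar> \<le> \<alpha> t \<and> \<bar>\<Lambda> t m - Vh t (\<sigma> t m)\<bar> \<le> \<alpha> t"
  using assms
proof (induction t arbitrary: m rule: inc_induct)
  case base
  then show ?case
    by (simp add: V_last \<Lambda>_last Vh_last \<alpha>_last)
next
  case (step t)
  then have "t \<le> T"
    by simp
  then show ?case
    using Q_\<Theta>_close[OF \<open>t \<le> T\<close> step.prems _ step.IH]
    by (rule V_\<Lambda>_close_if_Q_\<Theta>_close[OF _ step.prems])
qed

lemma Q_\<Theta>_V_\<Lambda>_gap:
  assumes "t \<le> T" and "m \<in> Mset h Wr Ur t" and "u \<in> Ur t"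
  shows "\<bar>Q t m u - \<Theta> t m u\<bar> \<le> 2 * \<alpha> t \<and> \<bar>V t m - \<Lambda> t m\<bar> \<le> 2 * \<alpha> t"
proof -
  have "\<bar>Q t m u - Qh t (\<sigma> t m) u\<bar> \<le> \<alpha> t \<and> \<bar>\<Theta> t m u - Qh t (\<sigma> t m) u\<bar> \<le> \<alpha> t"
    using assms(1) by (intro Q_\<Theta>_close[OF assms] V_\<Lambda>_close) auto
  moreover have "\<bar>V t m - Vh t (\<sigma> t m)\<bar> \<le> \<alpha> t \<and> \<bar>\<Lambda> t m - Vh t (\<sigma> t m)\<bar> \<le> \<alpha> t"
    using assms(1,2) by (intro V_\<Lambda>_close) auto
  ultimately show ?thesis
    by linarith
qed

end

theorem theorem4:
  fixes T :: nat
    and \<Omega> :: "'o set"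
    and Wv :: "nat \<Rightarrow> 'o \<Rightarrow> 'a::metric_space"
    and Wsp Usp Ysp Ur :: "nat \<Rightarrow> 'a set"
    and Csp :: "nat \<Rightarrow> real set"
    and h :: "nat \<Rightarrow> 'a mem \<Rightarrow> 'a"
    and d :: "nat \<Rightarrow> 'a mem \<Rightarrow> real"
    and \<sigma> :: "nat \<Rightarrow> 'a mem \<Rightarrow> 'p::metric_space"
    and Psp :: "nat \<Rightarrow> 'p set"
    and \<epsilon> \<delta> lam :: "nat \<Rightarrow> real"
    and Q :: "nat \<Rightarrow> 'a mem \<Rightarrow> 'a \<Rightarrow> real"
    and V :: "nat \<Rightarrow> 'a mem \<Rightarrow> real"
    and Qh :: "nat \<Rightarrow> 'p \<Rightarrow> 'a \<Rightarrow> real"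
    and Vh :: "nat \<Rightarrow> 'p \<Rightarrow> real"
    and gh :: "nat \<Rightarrow> 'p \<Rightarrow> 'a"
    and \<Theta> :: "nat \<Rightarrow> 'a mem \<Rightarrow> 'a \<Rightarrow> real"
    and \<Lambda> :: "nat \<Rightarrow> 'a mem \<Rightarrow> real"
    and LV :: "nat \<Rightarrow> real"
    and \<alpha> :: "nat \<Rightarrow> real"
  defines "Wr \<equiv> (\<lambda>l. Wv l ` \<Omega>)"
  assumes indep: "(\<lambda>\<omega>. restrict (\<lambda>l. Wv l \<omega>) {..T}) ` \<Omega> = PiE {..T} Wr"
    and W_in: "\<forall>l\<le>T. \<forall>\<omega>\<in>\<Omega>. Wv l \<omega> \<in> Wsp l"
    and Ur_sub: "\<forall>t\<le>T. Ur t \<subseteq> Usp t"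
    and bdd_WU: "\<forall>t\<le>T. bounded (Wsp t) \<and> bounded (Usp t)"
    and bdd_Y: "\<forall>t\<le>Suc T. bounded (Ysp t)"
    and bdd_C: "\<forall>t\<le>T. bounded (Csp t) \<and> Csp t \<subseteq> {0..}"
    and h_maps: "\<forall>t\<le>Suc T. \<forall>x\<in>hdom Wsp Usp t. h t x \<in> Ysp t"
    and h_lip: "\<forall>t\<le>Suc T. lipschitz_wrt pdist dist (hdom Wsp Usp t) (h t)"
    and h_inv: "\<forall>t\<le>Suc T. L_invertible pdist dist (hdom Wsp Usp t) (h t)"
    and d_maps: "\<forall>t\<le>T. \<forall>x\<in>hdom Wsp Usp (Suc t). d t x \<in> Csp t"
    and d_lip: "\<forall>t\<le>T. lipschitz_wrt pdist dist (hdom Wsp Usp (Suc t)) (d t)"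
    \<comment> \<open>approximate information state\<close>
    and \<sigma>_maps: "\<forall>t\<le>T. \<forall>m\<in>Msp Ysp Usp t. \<sigma> t m \<in> Psp t"
    and bdd_P: "\<forall>t\<le>T. bounded (Psp t)"
    and \<sigma>_inv: "\<forall>t\<le>T. L_invertible pdist dist (Msp Ysp Usp t) (\<sigma> t)"
    and params_nonneg: "\<forall>t\<le>T. \<epsilon> t \<ge> 0 \<and> \<delta> t \<ge> 0 \<and> lam t \<ge> 0"
    and ais1: "\<forall>t\<le>T. \<forall>m\<in>Mset h Wr Ur t. \<forall>u\<in>Ur t.
        \<bar>Sup (Cset h Wr d t m u) - Sup (CsetP h Wr Ur d \<sigma> t (\<sigma> t m) u)\<bar> \<le> \<epsilon> t"
    and ais2: "\<forall>t\<le>T. \<forall>m\<in>Mset h Wr Ur t. \<forall>u\<in>Ur t.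
        hdist dist (PiNext h Wr \<sigma> t m u) (PiNextP h Wr Ur \<sigma> t (\<sigma> t m) u) \<le> \<delta> t"
    and ais3: "\<forall>t\<le>T. \<forall>p1\<in>PiR h Wr Ur \<sigma> t. \<forall>p2\<in>PiR h Wr Ur \<sigma> t. \<forall>u\<in>Ur t.
        hdist dist (PiNextP h Wr Ur \<sigma> t p1 u) (PiNextP h Wr Ur \<sigma> t p2 u) \<le> lam t * dist p1 p2"
    \<comment> \<open>memory-based dynamic program\<close>
    and V_end: "\<forall>m. V (Suc T) m = 0"
    and Q_def: "\<forall>t\<le>T. \<forall>m\<in>Mset h Wr Ur t. \<forall>u\<in>Ur t.
        Q t m u = max (Sup (Cset h Wr d t m u)) (SUP m'\<in>Mnext h Wr t m u. V (Suc t) m')"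
    and V_def: "\<forall>t\<le>T. \<forall>m\<in>Mset h Wr Ur t. V t m = (INF u\<in>Ur t. Q t m u)"
    \<comment> \<open>approximate dynamic program\<close>
    and Vh_end: "\<forall>p. Vh (Suc T) p = 0"
    and Qh_def: "\<forall>t\<le>T. \<forall>p\<in>PiR h Wr Ur \<sigma> t. \<forall>u\<in>Ur t.
        Qh t p u = max (Sup (CsetP h Wr Ur d \<sigma> t p u)) (SUP p'\<in>PiNextP h Wr Ur \<sigma> t p u. Vh (Suc t) p')"
    and Vh_def: "\<forall>t\<le>T. \<forall>p\<in>PiR h Wr Ur \<sigma> t. Vh t p = (INF u\<in>Ur t. Qh t p u)"
    \<comment> \<open>infimum attained; gh selects a minimiser\<close>
    and attained: "\<forall>t\<le>T. \<forall>p\<in>PiR h Wr Ur \<sigma> t. \<exists>u\<in>Ur t. Qh t p u = Vh t p"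
    and gh_argmin: "\<forall>t\<le>T. \<forall>p\<in>PiR h Wr Ur \<sigma> t.
        gh t p \<in> Ur t \<and> (\<forall>u\<in>Ur t. Qh t p (gh t p) \<le> Qh t p u)"
    \<comment> \<open>value of the approximate strategy g^ap_t(m) = gh t (\<sigma> t m)\<close>
    and \<Lambda>_end: "\<forall>m. \<Lambda> (Suc T) m = 0"
    and \<Theta>_def: "\<forall>t\<le>T. \<forall>m\<in>Mset h Wr Ur t. \<forall>u\<in>Ur t.
        \<Theta> t m u = max (Sup (Cset h Wr d t m u)) (SUP m'\<in>Mnext h Wr t m u. \<Lambda> (Suc t) m')"
    and \<Lambda>_def: "\<forall>t\<le>T. \<forall>m\<in>Mset h Wr Ur t. \<Lambda> t m = \<Theta> t m (gh t (\<sigma> t m))"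
    \<comment> \<open>Lipschitz constants of Vh_{t+1} and the alphas\<close>
    and LV_lip: "\<forall>t<T. LV (Suc t) \<ge> 0 \<and> (\<forall>p1\<in>PiR h Wr Ur \<sigma> (Suc t). \<forall>p2\<in>PiR h Wr Ur \<sigma> (Suc t).
        \<bar>Vh (Suc t) p1 - Vh (Suc t) p2\<bar> \<le> LV (Suc t) * dist p1 p2)"
    and LV_end: "LV (Suc T) = 0"
    and \<alpha>_end: "\<alpha> (Suc T) = 0"
    and \<alpha>_def: "\<forall>t\<le>T. \<alpha> t = max (\<epsilon> t) (\<alpha> (Suc t) + LV (Suc t) * \<delta> t)"
  shows "\<forall>t\<le>T. \<forall>m\<in>Mset h Wr Ur t. \<forall>u\<in>Ur t.
           \<bar>Q t m u - \<Theta> t m u\<bar> \<le> 2 * \<alpha> t \<and> \<bar>V t m - \<Lambda> t m\<bar> \<le> 2 * \<alpha> t"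
proof (cases "\<Omega> = {}")
  case True
  then have "Mset h Wr Ur t = {}" for t
    by (auto simp: Mset_def Wm_def ProdL_def Wr_def)
  then show ?thesis
    by simp
next
  case False
  have PiR_bounded: "bounded (PiR h Wr Ur \<sigma> t)" if "t \<le> T" for t
  proof -
    have "Mset h Wr Ur t \<subseteq> Msp Ysp Usp t"
      using that W_in Ur_sub h_maps by (intro Mset_subset_Msp[where Wsp = Wsp]) (auto simp: Wr_def)
    then have "PiR h Wr Ur \<sigma> t \<subseteq> Psp t"
      using that \<sigma>_maps by (auto simp: PiR_def)
    then show ?thesis
      using that bdd_P bounded_subset by blast
  qed
  have Vh_lipschitz: "(LV (Suc t))-lipschitz_on (PiR h Wr Ur \<sigma> (Suc t)) (Vh (Suc t))" if "t < T" for t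
    using LV_lip that by (auto intro!: lipschitz_onI simp: dist_real_def)
  interpret ais_dynamic_programs T h d Wr Ur \<sigma> \<epsilon> \<delta> LV \<alpha> Q \<Theta> V \<Lambda> Qh Vh gh
    by (unfold_locales; ((rule PiR_bounded Vh_lipschitz ais1[rule_format] ais2[rule_format]
      V_end[rule_format] Q_def[rule_format] V_def[rule_format] Vh_end[rule_format]
      Qh_def[rule_format] Vh_def[rule_format] gh_argmin[rule_format] \<Lambda>_end[rule_format]
      \<Theta>_def[rule_format] \<Lambda>_def[rule_format] LV_end \<alpha>_end \<alpha>_def[rule_format]; assumption)
      | simp add: Wr_def False))
  show ?thesis
    using Q_\<Theta>_V_\<Lambda>_gap by blast
qed

end
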